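(* Let $A$ be a finite nonempty set of actions and $\boldsymbol{v}^0,\boldsymbol{v}^1,\dots\in\mathbb{R}^{|A|}$ an arbitrary sequence of value vectors. If $\boldsymbol{\sigma}^0,\boldsymbol{\sigma}^1,\dots$ is the sequence of regret-matching policies, or the sequence of regret-matching$^+$ policies, generated from $\boldsymbol{v}^0,\boldsymbol{v}^1,\dots$, then for all $t\ge 0$, $$\boldsymbol{\sigma}^{t+1}\cdot\boldsymbol{v}^t\ge\boldsymbol{\sigma}^t\cdot\boldsymbol{v}^t.$$
   Context: For $x\in\mathbb{R}$, $x^+:=\max(x,0)$, applied componentwise to vectors. Define $\boldsymbol{\sigma}_{\mathrm{rm}}(\boldsymbol{x}):=\boldsymbol{x}^+/(\boldsymbol{1}\cdot\boldsymbol{x}^+)$ if some $x_a>0$, and $\boldsymbol{1}/|A|$ otherwise. Regret-matching: $\boldsymbol{r}^0=\boldsymbol{0}$, $\boldsymbol{\sigma}^t=\boldsymbol{\sigma}_{\mathrm{rm}}(\boldsymbol{r}^t)$, $\boldsymbol{r}^{t+1}=\boldsymbol{r}^t+\boldsymbol{v}^t-(\boldsymbol{\sigma}^t\cdot\boldsymbol{v}^t)\boldsymbol{1}$. Regret-matching$^+$: $\boldsymbol{q}^0=\boldsymbol{0}$, $\boldsymbol{\sigma}^t=\boldsymbol{\sigma}_{\mathrm{rm}}(\boldsymbol{q}^t)$, $\boldsymbol{q}^{t+1}=\bigl(\boldsymbol{q}^t+\boldsymbol{v}^t-(\boldsymbol{\sigma}^t\cdot\boldsymbol{v}^t)\boldsymbol{1}\bigr)^+$.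 *)

theory Defs
  imports Complex_Main
begin

text \<open>Action set A (finite, nonempty); vectors in R^|A| are functions 'a => real,
  only their values on A matter. x^+ is componentwise max x 0.\<close>

definition pos_part :: "('a \<Rightarrow> real) \<Rightarrow> 'a \<Rightarrow> real" where
  "pos_part x = (\<lambda>a. max (x a) 0)"

definition dotA :: "'a set \<Rightarrow> ('a \<Rightarrow> real) \<Rightarrow> ('a \<Rightarrow> real) \<Rightarrow> real" where
  "dotA A x y = (\<Sum>a\<in>A. x a * y a)"

definition sigma_rm :: "'a set \<Rightarrow> ('a \<Rightarrow> real) \<Rightarrow> 'a \<Rightarrow> real" where
  "sigma_rm A x = (if \<exists>a\<in>A. x a > 0
     then (\<lambda>a. pos_part x a / (\<Sum>b\<in>A. pos_part x b))
     else (\<lambda>a. 1 / real (card A)))"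

primrec rm_regret :: "'a set \<Rightarrow> (nat \<Rightarrow> 'a \<Rightarrow> real) \<Rightarrow> nat \<Rightarrow> 'a \<Rightarrow> real" where
  "rm_regret A v 0 = (\<lambda>a. 0)"
| "rm_regret A v (Suc t) =
     (\<lambda>a. rm_regret A v t a + v t a - dotA A (sigma_rm A (rm_regret A v t)) (v t))"

definition rm_policy :: "'a set \<Rightarrow> (nat \<Rightarrow> 'a \<Rightarrow> real) \<Rightarrow> nat \<Rightarrow> 'a \<Rightarrow> real" where
  "rm_policy A v t = sigma_rm A (rm_regret A v t)"

primrec rmp_regret :: "'a set \<Rightarrow> (nat \<Rightarrow> 'a \<Rightarrow> real) \<Rightarrow> nat \<Rightarrow> 'a \<Rightarrow> real" where
  "rmp_regret A v 0 = (\<lambda>a. 0)"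
| "rmp_regret A v (Suc t) = pos_part
     (\<lambda>a. rmp_regret A v t a + v t a - dotA A (sigma_rm A (rmp_regret A v t)) (v t))"

definition rmp_policy :: "'a set \<Rightarrow> (nat \<Rightarrow> 'a \<Rightarrow> real) \<Rightarrow> nat \<Rightarrow> 'a \<Rightarrow> real" where
  "rmp_policy A v t = sigma_rm A (rmp_regret A v t)"

end

theory Submission
  imports Defs
begin

text \<open>Write \<open>c = \<sigma>\<^sup>t \<cdot> v\<^sup>t\<close> and \<open>g = v\<^sup>t - c\<close> for the instantaneous regret, so that both
  updates feed \<open>\<sigma>\<^sub>r\<^sub>m\<close> with (the positive part of) \<open>x + g\<close>, where \<open>\<sigma>\<^sub>r\<^sub>m(x) = \<sigma>\<^sup>t\<close>.
  Since policies are probability vectors, the claim becomes \<open>\<sigma>\<^sub>r\<^sub>m(x + g) \<cdot> g \<ge> 0\<close>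
  given \<open>\<sigma>\<^sub>r\<^sub>m(x) \<cdot> g = 0\<close>. Adding \<open>g\<close> moves each coordinate in the direction of
  \<open>g\<close>, hence \<open>(x + g)\<^sup>+ \<cdot> g \<ge> x\<^sup>+ \<cdot> g\<close>. If \<open>x\<close> has no positive entry, \<open>\<sigma>\<^sup>t\<close> is
  uniform and \<open>\<Sum> g = 0\<close>; if it has one, \<open>x + g\<close> has one too, since otherwise
  \<open>x\<^sup>+ \<cdot> g < 0\<close>.\<close>

lemma sigma_rm_pos_part [simp]: "sigma_rm A (pos_part x) = sigma_rm A x"
  unfolding sigma_rm_def pos_part_def by auto

lemma sum_pos_part_pos:
  assumes "finite A" "b \<in> A" "x b > 0"
  shows "(\<Sum>a\<in>A. pos_part x a) > 0"
proof -
  have "pos_part x b \<le> (\<Sum>a\<in>A. pos_part x a)"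
    by (rule member_le_sum) (auto simp: pos_part_def assms)
  with assms(3) show ?thesis by (simp add: pos_part_def)
qed

lemma dotA_sigma_rm_if_pos:
  assumes "finite A" "\<exists>a\<in>A. x a > 0"
  shows "dotA A (sigma_rm A x) g = dotA A (pos_part x) g / (\<Sum>b\<in>A. pos_part x b)"
  using assms(2) by (simp add: sigma_rm_def dotA_def sum_divide_distrib)

lemma dotA_sigma_rm_if_nonpos:
  assumes "\<not> (\<exists>a\<in>A. x a > 0)"
  shows "dotA A (sigma_rm A x) g = (\<Sum>a\<in>A. g a) / real (card A)"
  using assms by (simp add: sigma_rm_def dotA_def sum_divide_distrib)

lemma sum_sigma_rm:
  assumes "finite A" "A \<noteq> {}"
  shows "(\<Sum>a\<in>A. sigma_rm A x a) = 1"
proof (cases "\<exists>a\<in>A. x a > 0")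
  case True
  then have "(\<Sum>a\<in>A. pos_part x a) > 0"
    using sum_pos_part_pos[OF assms(1)] by blast
  with True show ?thesis by (simp add: sigma_rm_def sum_divide_distrib[symmetric])
next
  case False
  with assms show ?thesis by (simp add: sigma_rm_def)
qed

lemma dotA_sigma_rm_diff_const:
  assumes "finite A" "A \<noteq> {}"
  shows "dotA A (sigma_rm A x) (\<lambda>a. w a - c) = dotA A (sigma_rm A x) w - c"
proof -
  have "dotA A (sigma_rm A x) (\<lambda>a. w a - c)
      = dotA A (sigma_rm A x) w - c * (\<Sum>a\<in>A. sigma_rm A x a)"
    by (simp add: dotA_def algebra_simps sum_subtractf sum_distrib_left)
  then show ?thesis by (simp add: sum_sigma_rm[OF assms])
qed

lemma pos_part_add_mult_mono:
  "pos_part x a * g a \<le> pos_part (\<lambda>b. x b + g b) a * g a"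
  by (cases "g a \<ge> 0")
    (auto simp: pos_part_def intro: mult_right_mono mult_right_mono_neg)

lemma dotA_pos_part_add_mono:
  "dotA A (pos_part x) g \<le> dotA A (pos_part (\<lambda>a. x a + g a)) g"
  unfolding dotA_def by (intro sum_mono pos_part_add_mult_mono)

lemma dotA_pos_part_neg_if_add_nonpos:
  assumes "finite A" "b \<in> A" "x b > 0" and nonpos: "\<forall>a\<in>A. x a + g a \<le> 0"
  shows "dotA A (pos_part x) g < 0"
proof -
  have "\<forall>a\<in>A. pos_part x a * g a \<le> 0"
  proof
    fix a assume "a \<in> A"
    with nonpos show "pos_part x a * g a \<le> 0"
      by (cases "x a > 0") (auto simp: pos_part_def intro!: mult_nonneg_nonpos)
  qed
  moreover have "pos_part x b * g b < 0"
    using assms(3) nonpos assms(2) by (auto simp: pos_part_def intro!: mult_pos_neg)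
  ultimately have "(\<Sum>a\<in>A. pos_part x a * g a) < (\<Sum>a\<in>A. 0)"
    using assms(2) by (intro sum_strict_mono_ex1[OF assms(1)]) auto
  then show ?thesis by (simp add: dotA_def)
qed

lemma dotA_sigma_rm_add_nonneg:
  assumes fin: "finite A" and ne: "A \<noteq> {}"
    and indiff: "dotA A (sigma_rm A x) g = 0"
  shows "dotA A (sigma_rm A (\<lambda>a. x a + g a)) g \<ge> 0"
proof -
  let ?z = "\<lambda>a. x a + g a"
  have if_z_pos: "dotA A (sigma_rm A ?z) g \<ge> 0"
    if "\<exists>a\<in>A. ?z a > 0" "dotA A (pos_part x) g \<ge> 0"
  proof -
    have "(\<Sum>b\<in>A. pos_part ?z b) \<ge> 0"
      by (rule sum_nonneg) (simp add: pos_part_def)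
    with that dotA_pos_part_add_mono[of A x g] show ?thesis
      by (simp add: dotA_sigma_rm_if_pos[OF fin])
  qed
  show ?thesis
  proof (cases "\<exists>a\<in>A. x a > 0")
    case True
    then obtain b where b: "b \<in> A" "x b > 0" by blast
    have "dotA A (pos_part x) g = 0"
      using indiff sum_pos_part_pos[of A b x, OF fin b] by (simp add: dotA_sigma_rm_if_pos[OF fin True])
    moreover have "\<exists>a\<in>A. ?z a > 0"
      using dotA_pos_part_neg_if_add_nonpos[of A b x g, OF fin b] calculation by force
    ultimately show ?thesis using if_z_pos by simp
  next
    case False
    then have "dotA A (pos_part x) g = 0"
      by (simp add: dotA_def pos_part_def max_def not_less)
    moreover have "(\<Sum>a\<in>A. g a) = 0"
      using indiff fin ne by (simp add: dotA_sigma_rm_if_nonpos[OF False])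
    ultimately show ?thesis
      using if_z_pos dotA_sigma_rm_if_nonpos[of A ?z g] by fastforce
  qed
qed

lemma dotA_sigma_rm_regret_update_ge:
  assumes "finite A" "A \<noteq> {}"
  shows "dotA A (sigma_rm A (\<lambda>a. x a + w a - dotA A (sigma_rm A x) w)) w
         \<ge> dotA A (sigma_rm A x) w"
proof -
  define c where "c = dotA A (sigma_rm A x) w"
  have "dotA A (sigma_rm A x) (\<lambda>a. w a - c) = 0"
    by (simp add: dotA_sigma_rm_diff_const[OF assms] c_def)
  then have "dotA A (sigma_rm A (\<lambda>a. x a + (w a - c))) (\<lambda>a. w a - c) \<ge> 0"
    by (rule dotA_sigma_rm_add_nonneg[OF assms])
  then show ?thesis
    by (simp add: dotA_sigma_rm_diff_const[OF assms] add_diff_eq flip: c_def)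
qed

theorem theorem2:
  fixes A :: "'a set" and v :: "nat \<Rightarrow> 'a \<Rightarrow> real"
    and \<sigma> :: "nat \<Rightarrow> 'a \<Rightarrow> real" and t :: nat
  assumes "finite A" and "A \<noteq> {}"
    and "\<sigma> = rm_policy A v \<or> \<sigma> = rmp_policy A v"
  shows "dotA A (\<sigma> (Suc t)) (v t) \<ge> dotA A (\<sigma> t) (v t)"
  using assms(3)
proof
  assume "\<sigma> = rm_policy A v"
  then show ?thesis
    using dotA_sigma_rm_regret_update_ge[OF assms(1,2), of "rm_regret A v t" "v t"]
    by (simp add: rm_policy_def)
next
  assume "\<sigma> = rmp_policy A v"
  then show ?thesis
    using dotA_sigma_rm_regret_update_ge[OF assms(1,2), of "rmp_regret A v t" "v t"]
    by (simp add: rmp_policy_def)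
qed

end
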